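(* With notation as in the context, for all $1\le i,j,h,k\le m+n$, $r\ge1$ and $x,y_1,\dots,y_r\in \mathrm{Mat}_\ell$, $$[t_{ij;\mathfrak{b}}(x),t_{hk;\mathfrak{b}}(y_1\otimes\cdots\otimes y_r)]=(-1)^{|i||j|+|i||h|+|j||h|}\sum_{s=1}^r\Big(t_{hj;\mathfrak{b}}(y_1\otimes\cdots\otimes y_{s-1})\,t_{ik;\mathfrak{b}}(xy_s\otimes y_{s+1}\otimes\cdots\otimes y_r)-t_{hj;\mathfrak{b}}(y_1\otimes\cdots\otimes y_{s-1}\otimes y_sx)\,t_{ik;\mathfrak{b}}(y_{s+1}\otimes\cdots\otimes y_r)\Big),$$ where $xy_s$, $y_sx$ are matrix products in $\mathrm{Mat}_\ell$, the bracket is the supercommutator in $U(\mathfrak{gl}_{M|N})$, and an empty tensor is interpreted as $1\in T(\mathrm{Mat}_\ell)$.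
   Context: Let $m,n,\ell$ be non-negative integers and $\mathfrak{b}=(\mathfrak{b}_1,\dots,\mathfrak{b}_{m+n})$ a sequence with $m$ entries $\delta$ and $n$ entries $\epsilon$; $|i|=\bar0$ if $\mathfrak{b}_i=\delta$, $|i|=\bar1$ if $\mathfrak{b}_i=\epsilon$. Let $\pi$ be a rectangular array of boxes with $m+n$ rows and $\ell$ columns, row $i$ having parity $|i|$; for $1\le i\le m+n$, $1\le c\le\ell$ let $i\star c$ denote the box in row $i$ (counted from the top) and column $c$ (counted from the left). Let $V=\mathbb{C}^{M|N}$ ($M=m\ell$, $N=n\ell$) have homogeneous basis $\{v_a\}$ indexed by boxes, $v_a$ of parity that of its row, and $\mathfrak{gl}_{M|N}=\mathrm{End}(V)$ with matrix units $e_{a,b}$. $\mathrm{Mat}_\ell$ is the space of complex $\ell\times\ell$ matrices with matrix units $e_{a,c}$, and $T(\mathrm{Mat}_\ell)$ its tensor algebra. For $1\le i,j\le m+n$ define the linear map $t_{ij;\mathfrak{b}}:T(\mathrm{Mat}_\ell)\to U(\mathfrak{gl}_{M|N})$ by $t_{ij;\mathfrak{b}}(1)=\delta_{ij}$, $t_{ij;\mathfrak{b}}(e_{a,c})=(-1)^{|i|}e_{i\star a,\,j\star c}$ (extended linearly to $\mathrm{Mat}_\ell$), and $t_{ij;\mathfrak{b}}(x_1\otimes\cdots\otimes x_r)=\sum_{1\le i_1,\dots,i_{r-1}\le m+n}t_{ii_1;\mathfrak{b}}(x_1)t_{i_1i_2;\mathfrak{b}}(x_2)\cdots t_{i_{r-1}j;\mathfrak{b}}(x_r)$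 for $x_1,\dots,x_r\in\mathrm{Mat}_\ell$. *)

theory Defs
  imports "HOL-Library.Function_Algebras" "Jordan_Normal_Form.Matrix"
begin

text \<open>The sequence b: entries delta (Dl, even) and epsilon (Ep, odd).
  Rows are numbered 1..m+n; row i has symbol bb ! (i - 1).\<close>
datatype bsym = Dl | Ep

definition par :: "bsym list \<Rightarrow> nat \<Rightarrow> nat" where
  "par bb i = (if bb ! (i - 1) = Ep then 1 else 0)"

text \<open>Boxes i*c are pairs (row, column), rows 1..m+n, columns 1..l.
  Generators of U(gl_{M|N}) are the matrix units e_{a,b}, indexed by pairs of boxes.\<close>
type_synonym box = "nat \<times> nat"
type_synonym gen = "box \<times> box"

text \<open>Free associative algebra on the generators: functions from words to complex
  coefficients (finite support is imposed where needed).\<close>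
type_synonym felt = "gen list \<Rightarrow> complex"

definition fmul :: "felt \<Rightarrow> felt \<Rightarrow> felt" (infixl "\<odot>" 70) where
  "p \<odot> q = (\<lambda>w. \<Sum>k\<le>length w. p (take k w) * q (drop k w))"

definition fsc :: "complex \<Rightarrow> felt \<Rightarrow> felt" where
  "fsc c p = (\<lambda>w. c * p w)"

definition fone :: felt where
  "fone = (\<lambda>w. if w = [] then 1 else 0)"

definition fgen :: "gen \<Rightarrow> felt" where
  "fgen g = (\<lambda>w. if w = [g] then 1 else 0)"

definition boxes :: "bsym list \<Rightarrow> nat \<Rightarrow> box set" where
  "boxes bb l = {1..length bb} \<times> {1..l}"

definition gens :: "bsym list \<Rightarrow> nat \<Rightarrow> gen set" where
  "gens bb l = boxes bb l \<times> boxes bb l"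

definition bpar :: "bsym list \<Rightarrow> box \<Rightarrow> nat" where
  "bpar bb a = par bb (fst a)"

definition glrel :: "bsym list \<Rightarrow> gen \<Rightarrow> gen \<Rightarrow> felt" where
  "glrel bb x y = (case x of (a, b) \<Rightarrow> case y of (c, d) \<Rightarrow>
     (let s = (-1::complex) ^ ((bpar bb a + bpar bb b) * (bpar bb c + bpar bb d)) in
       fgen x \<odot> fgen y - fsc s (fgen y \<odot> fgen x)
       - (fsc (of_bool (b = c)) (fgen (a, d)) - fsc (s * of_bool (d = a)) (fgen (c, b)))))"

definition falg :: "bsym list \<Rightarrow> nat \<Rightarrow> felt set" where
  "falg bb l = {p. finite {w. p w \<noteq> 0} \<and> (\<forall>w. p w \<noteq> 0 \<longrightarrow> set w \<subseteq> gens bb l)}"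

inductive_set Uideal :: "bsym list \<Rightarrow> nat \<Rightarrow> felt set" for bb l where
  rel: "x \<in> gens bb l \<Longrightarrow> y \<in> gens bb l \<Longrightarrow> glrel bb x y \<in> Uideal bb l"
| zero: "0 \<in> Uideal bb l"
| add: "p \<in> Uideal bb l \<Longrightarrow> q \<in> Uideal bb l \<Longrightarrow> p + q \<in> Uideal bb l"
| smult: "p \<in> Uideal bb l \<Longrightarrow> fsc c p \<in> Uideal bb l"
| lmult: "p \<in> Uideal bb l \<Longrightarrow> q \<in> falg bb l \<Longrightarrow> q \<odot> p \<in> Uideal bb l"
| rmult: "p \<in> Uideal bb l \<Longrightarrow> q \<in> falg bb l \<Longrightarrow> p \<odot> q \<in> Uideal bb l"

definition Ueq :: "bsym list \<Rightarrow> nat \<Rightarrow> felt \<Rightarrow> felt \<Rightarrow> bool" where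
  "Ueq bb l u v \<longleftrightarrow> u - v \<in> Uideal bb l"

text \<open>Supercommutator of homogeneous elements, sign s = (-1)^{|X||Y|} supplied.\<close>
definition scomm :: "complex \<Rightarrow> felt \<Rightarrow> felt \<Rightarrow> felt" where
  "scomm s X Y = X \<odot> Y - fsc s (Y \<odot> X)"

text \<open>t_{ij}(x) for x in Mat_l (JNF matrix, 0-based indices: entry (a,c) is x $$ (a-1,c-1)).\<close>
definition t1 :: "bsym list \<Rightarrow> nat \<Rightarrow> nat \<Rightarrow> nat \<Rightarrow> complex mat \<Rightarrow> felt" where
  "t1 bb l i j x = fsc ((-1) ^ par bb i)
     (\<Sum>a\<in>{1..l}. \<Sum>c\<in>{1..l}. fsc (x $$ (a - 1, c - 1)) (fgen ((i, a), (j, c))))"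

text \<open>t_{ij} on pure tensors x_1 (x) ... (x) x_r, given as lists; [] is the unit 1.\<close>
fun tt :: "bsym list \<Rightarrow> nat \<Rightarrow> nat \<Rightarrow> nat \<Rightarrow> complex mat list \<Rightarrow> felt" where
  "tt bb l i j [] = fsc (of_bool (i = j)) fone"
| "tt bb l i j [x] = t1 bb l i j x"
| "tt bb l i j (x # y # ys) = (\<Sum>k\<in>{1..length bb}. t1 bb l i k x \<odot> tt bb l k j (y # ys))"

end

(*
  The map t_{hk} sends y_1 (x) ... (x) y_r to a matrix product of r factors t_{h p_1}(y_1) ...
  t_{p_(r-1) k}(y_r). Supercommutation with t_{ij}(x) is a super-derivation, so by the graded
  Leibniz rule it hits one factor at a time, and on a single factor it is the defining relation
  of gl_{M|N} summed over matrix entries: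
    [t_{ij}(x), t_{hk}(y)] = +-(delta_{hj} t_{ik}(xy) - delta_{ik} t_{hj}(yx)).
  Induction on r then regroups the terms by the position s of the factor that was hit; the
  identity even holds for r = 0, where both sides vanish.
*)

theory Submission
  imports Defs
begin

section \<open>The free algebra and the quotient by the relations of gl(M|N)\<close>

lemma sum_felt_apply: "(sum f A :: felt) w = (\<Sum>a\<in>A. f a w)"
  by (induction A rule: infinite_finite_induct) auto

lemma fmul_assoc: "(p \<odot> q) \<odot> r = p \<odot> (q \<odot> r)"
proof (rule ext)
  fix w :: "gen list"
  define n where "n = length w"
  define g where "g i j = p (take i w) * q (take j (drop i w)) * r (drop j (drop i w))" for i j
  have "((p \<odot> q) \<odot> r) w = (\<Sum>k\<le>n. \<Sum>i\<le>k. g i (k - i))"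
    unfolding fmul_def n_def g_def
    by (auto simp: sum_distrib_right min_def drop_take intro!: sum.cong)
  also have "\<dots> = (\<Sum>(i,j)\<in>{(i,j). i+j \<le> n}. g i j)"
    by (rule sum.triangle_reindex_eq[symmetric])
  also have "{(i,j). i+j \<le> n} = Sigma {..n} (\<lambda>i. {..n-i})" by auto
  also have "(\<Sum>(i,j)\<in>Sigma {..n} (\<lambda>i. {..n-i}). g i j) = (\<Sum>i\<le>n. \<Sum>j\<le>n-i. g i j)"
    by (rule sum.Sigma[symmetric]) auto
  also have "\<dots> = (p \<odot> (q \<odot> r)) w"
    unfolding fmul_def n_def g_def
    by (auto simp: sum_distrib_left mult.assoc add.commute intro!: sum.cong)
  finally show "((p \<odot> q) \<odot> r) w = (p \<odot> (q \<odot> r)) w" .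
qed

lemma fmul_zero_left [simp]: "0 \<odot> r = 0"
  by (simp add: fmul_def fun_eq_iff)

lemma fmul_zero_right [simp]: "r \<odot> 0 = 0"
  by (simp add: fmul_def fun_eq_iff)

lemma fmul_diff_left: "(p - q) \<odot> r = p \<odot> r - q \<odot> r"
  by (auto simp: fmul_def fun_eq_iff left_diff_distrib sum_subtractf)

lemma fmul_diff_right: "r \<odot> (p - q) = r \<odot> p - r \<odot> q"
  by (auto simp: fmul_def fun_eq_iff right_diff_distrib sum_subtractf)

lemma fmul_sum_left: "sum f A \<odot> r = (\<Sum>a\<in>A. f a \<odot> r)"
  by (simp add: fun_eq_iff sum_felt_apply fmul_def sum_distrib_right sum.swap[of _ A])

lemma fmul_sum_right: "r \<odot> sum f A = (\<Sum>a\<in>A. r \<odot> f a)"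
  by (simp add: fun_eq_iff sum_felt_apply fmul_def sum_distrib_left sum.swap[of _ A])

lemma fmul_fsc_left: "fsc c p \<odot> r = fsc c (p \<odot> r)"
  by (auto simp: fmul_def fsc_def fun_eq_iff sum_distrib_left mult.assoc)

lemma fmul_fsc_right: "r \<odot> fsc c p = fsc c (r \<odot> p)"
  by (auto simp: fmul_def fsc_def fun_eq_iff sum_distrib_left mult.left_commute)

lemma fmul_fone_left [simp]: "fone \<odot> p = p"
proof -
  have "(\<Sum>k\<le>length w. (if take k w = [] then 1 else 0) * p (drop k w)) = p w" for w :: "gen list"
    by (subst sum.atLeast_Suc_atMost[of 0, simplified atLeast0AtMost]) (auto intro!: sum.neutral)
  then show ?thesis by (auto simp: fmul_def fone_def fun_eq_iff)
qed

lemma fmul_fone_right [simp]: "p \<odot> fone = p"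
proof -
  have "(\<Sum>k\<le>length w. p (take k w) * (if drop k w = [] then 1 else 0))
      = (\<Sum>k\<le>length w. if k = length w then p w else 0)" for w :: "gen list"
    by (rule sum.cong) auto
  then show ?thesis by (auto simp: fmul_def fone_def fun_eq_iff)
qed

lemma fsc_fsc [simp]: "fsc c (fsc d p) = fsc (c * d) p"
  by (simp add: fsc_def mult.assoc)

lemma fsc_one [simp]: "fsc 1 p = p"
  by (simp add: fsc_def)

lemma fsc_zero [simp]: "fsc 0 p = 0"
  by (simp add: fsc_def fun_eq_iff)

lemma fsc_zero_right [simp]: "fsc c 0 = 0"
  by (simp add: fsc_def fun_eq_iff)

lemma fsc_minus_one: "fsc (-1) p = - p"
  by (simp add: fsc_def fun_eq_iff)

lemma fsc_of_bool: "fsc (of_bool b) p = (if b then p else 0)"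
  by simp

lemma fsc_add: "fsc c (p + q) = fsc c p + fsc c q"
  by (simp add: fsc_def fun_eq_iff distrib_left)

lemma fsc_diff: "fsc c (p - q) = fsc c p - fsc c q"
  by (simp add: fsc_def fun_eq_iff right_diff_distrib)

lemma fsc_sum: "fsc c (sum f A) = (\<Sum>a\<in>A. fsc c (f a))"
  by (simp add: fun_eq_iff sum_felt_apply fsc_def sum_distrib_left)

lemma fsc_sum_left: "fsc (sum f A) p = (\<Sum>a\<in>A. fsc (f a) p)"
  by (simp add: fun_eq_iff sum_felt_apply fsc_def sum_distrib_right)

lemma falgI:
  "finite {w. p w \<noteq> 0} \<Longrightarrow> (\<And>w. p w \<noteq> 0 \<Longrightarrow> set w \<subseteq> gens bb l) \<Longrightarrow> p \<in> falg bb l"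
  unfolding falg_def by blast

lemma falgD:
  "p \<in> falg bb l \<Longrightarrow> finite {w. p w \<noteq> 0}"
  "p \<in> falg bb l \<Longrightarrow> p w \<noteq> 0 \<Longrightarrow> set w \<subseteq> gens bb l"
  unfolding falg_def by blast+

lemma falg_zero: "0 \<in> falg bb l"
  by (rule falgI) auto

lemma falg_add: "p \<in> falg bb l \<Longrightarrow> q \<in> falg bb l \<Longrightarrow> p + q \<in> falg bb l"
proof (rule falgI)
  assume p: "p \<in> falg bb l" and q: "q \<in> falg bb l"
  have "{w. (p + q) w \<noteq> 0} \<subseteq> {w. p w \<noteq> 0} \<union> {w. q w \<noteq> 0}" by auto
  then show "finite {w. (p + q) w \<noteq> 0}"
    using falgD(1)[OF p] falgD(1)[OF q] by (rule finite_subset[OF _ finite_UnI])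
  show "set w \<subseteq> gens bb l" if "(p + q) w \<noteq> 0" for w
    using that falgD(2)[OF p] falgD(2)[OF q] by force
qed

lemma falg_sum: "(\<And>a. a \<in> A \<Longrightarrow> f a \<in> falg bb l) \<Longrightarrow> sum f A \<in> falg bb l"
  by (induction A rule: infinite_finite_induct) (auto intro: falg_add falg_zero)

lemma falg_fsc:
  assumes p: "p \<in> falg bb l"
  shows "fsc c p \<in> falg bb l"
proof (rule falgI)
  show "finite {w. fsc c p w \<noteq> 0}"
    by (rule finite_subset[OF _ falgD(1)[OF p]]) (auto simp: fsc_def)
qed (use falgD(2)[OF p] in \<open>auto simp: fsc_def\<close>)

lemma falg_fone: "fone \<in> falg bb l"
proof (rule falgI)
  show "finite {w. fone w \<noteq> 0}"
    by (rule finite_subset[of _ "{[]}"]) (auto simp: fone_def)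
qed (simp add: fone_def split: if_splits)

lemma falg_fgen: "g \<in> gens bb l \<Longrightarrow> fgen g \<in> falg bb l"
proof (rule falgI)
  show "finite {w. fgen g w \<noteq> 0}"
    by (rule finite_subset[of _ "{[g]}"]) (auto simp: fgen_def)
qed (simp add: fgen_def split: if_splits)

lemma falg_fmul:
  assumes p: "p \<in> falg bb l" and q: "q \<in> falg bb l"
  shows "p \<odot> q \<in> falg bb l"
proof (rule falgI)
  define S where "S = (\<lambda>(u, v). u @ v) ` ({u. p u \<noteq> 0} \<times> {v. q v \<noteq> 0})"
  have support: "w \<in> S" if "(p \<odot> q) w \<noteq> 0" for w
  proof -
    have "(\<Sum>k\<le>length w. p (take k w) * q (drop k w)) \<noteq> 0"
      using that unfolding fmul_def .
    then obtain k where "p (take k w) * q (drop k w) \<noteq> 0"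
      by (rule sum.not_neutral_contains_not_neutral)
    then have "(take k w, drop k w) \<in> {u. p u \<noteq> 0} \<times> {v. q v \<noteq> 0}" by simp
    then show ?thesis unfolding S_def by (rule rev_image_eqI) simp
  qed
  have "finite S" unfolding S_def using falgD(1)[OF p] falgD(1)[OF q] by simp
  then show "finite {w. (p \<odot> q) w \<noteq> 0}"
    by (rule finite_subset[rotated]) (simp add: subset_iff support)
  show "set w \<subseteq> gens bb l" if "(p \<odot> q) w \<noteq> 0" for w
    using support[OF that] falgD(2)[OF p] falgD(2)[OF q] unfolding S_def by force
qed

lemma Uideal_diff:
  assumes "p \<in> Uideal bb l" "q \<in> Uideal bb l"
  shows "p - q \<in> Uideal bb l"
proof -
  have "p + fsc (-1) q \<in> Uideal bb l"
    using assms by (intro Uideal.add Uideal.smult)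
  then show ?thesis by (simp add: fsc_minus_one)
qed

lemma Uideal_sum: "(\<And>a. a \<in> A \<Longrightarrow> f a \<in> Uideal bb l) \<Longrightarrow> sum f A \<in> Uideal bb l"
  by (induction A rule: infinite_finite_induct) (auto intro: Uideal.zero Uideal.add)

lemma Ueq_refl: "Ueq bb l p p"
  by (simp add: Ueq_def Uideal.zero)

text \<open>Without these, calculations mixing \<open>=\<close> and \<open>Ueq\<close> use the generic
  substitution rules, whose higher-order unification diverges on the large sums below.\<close>

lemma eq_Ueq_trans [trans]: "p = q \<Longrightarrow> Ueq bb l q r \<Longrightarrow> Ueq bb l p r"
  by simp

lemma Ueq_eq_trans [trans]: "Ueq bb l p q \<Longrightarrow> q = r \<Longrightarrow> Ueq bb l p r"
  by simp

lemma Ueq_add: "Ueq bb l p q \<Longrightarrow> Ueq bb l p' q' \<Longrightarrow> Ueq bb l (p + p') (q + q')"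
  unfolding Ueq_def using Uideal.add[of "p - q" bb l "p' - q'"] by (simp add: algebra_simps)

lemma Ueq_fsc: "Ueq bb l p q \<Longrightarrow> Ueq bb l (fsc c p) (fsc c q)"
  unfolding Ueq_def using Uideal.smult[of "p - q" bb l c] by (simp add: fsc_diff)

lemma Ueq_sum: "(\<And>a. a \<in> A \<Longrightarrow> Ueq bb l (f a) (g a)) \<Longrightarrow> Ueq bb l (sum f A) (sum g A)"
  unfolding Ueq_def using Uideal_sum[of A "\<lambda>a. f a - g a" bb l] by (simp add: sum_subtractf)

lemma Ueq_fmul_left: "Ueq bb l p q \<Longrightarrow> r \<in> falg bb l \<Longrightarrow> Ueq bb l (r \<odot> p) (r \<odot> q)"
  unfolding Ueq_def using Uideal.lmult[of "p - q" bb l r] by (simp add: fmul_diff_right)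

lemma Ueq_fmul_right: "Ueq bb l p q \<Longrightarrow> r \<in> falg bb l \<Longrightarrow> Ueq bb l (p \<odot> r) (q \<odot> r)"
  unfolding Ueq_def using Uideal.rmult[of "p - q" bb l r] by (simp add: fmul_diff_left)

lemma scomm_sum_left: "scomm s (sum f A) Y = (\<Sum>a\<in>A. scomm s (f a) Y)"
  by (simp add: scomm_def fmul_sum_left fmul_sum_right fsc_sum sum_subtractf)

lemma scomm_sum_right: "scomm s X (sum f A) = (\<Sum>a\<in>A. scomm s X (f a))"
  by (simp add: scomm_def fmul_sum_left fmul_sum_right fsc_sum sum_subtractf)

lemma scomm_fsc_left: "scomm s (fsc c X) Y = fsc c (scomm s X Y)"
  by (simp add: scomm_def fmul_fsc_left fmul_fsc_right fsc_diff mult.commute)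

lemma scomm_fsc_right: "scomm s X (fsc c Y) = fsc c (scomm s X Y)"
  by (simp add: scomm_def fmul_fsc_left fmul_fsc_right fsc_diff mult.commute)

lemma scomm_fone: "scomm 1 X fone = 0"
  by (simp add: scomm_def)

lemma scomm_fmul_right:
  "scomm (s * s') X (B \<odot> C) = scomm s X B \<odot> C + fsc s (B \<odot> scomm s' X C)"
  by (simp add: scomm_def fmul_diff_left fmul_diff_right fmul_fsc_left fmul_fsc_right fsc_diff
      fmul_assoc mult.commute)

lemma minus_one_power_mult_add:
  "(-1 :: 'a :: ring_1) ^ (a * (b + d)) = (-1) ^ (a * (b + c)) * (-1) ^ (a * (c + d))"
proof -
  have "a * (b + c) + a * (c + d) = a * (b + d) + 2 * (a * c)" by (simp add: algebra_simps)
  then have "(-1 :: 'a) ^ (a * (b + c)) * (-1) ^ (a * (c + d)) = (-1) ^ (a * (b + d)) * (-1) ^ (2 * (a * c))"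
    by (simp only: power_add[symmetric])
  then show ?thesis by (simp only: power_minus1_even mult_1_right)
qed

lemma minus_one_power_sign_shift:
  "(-1 :: 'a :: ring_1) ^ ((a + b) * (c + e)) * (-1) ^ (a * b + a * e + b * e) = (-1) ^ (a * b + a * c + b * c)"
proof -
  have "(a + b) * (c + e) + (a * b + a * e + b * e) = (a * b + a * c + b * c) + 2 * (a * e + b * e)"
    by (simp add: algebra_simps)
  then have "(-1 :: 'a) ^ ((a + b) * (c + e)) * (-1) ^ (a * b + a * e + b * e)
      = (-1) ^ (a * b + a * c + b * c) * (-1) ^ (2 * (a * e + b * e))"
    by (simp only: power_add[symmetric])
  then show ?thesis by (simp only: power_minus1_even mult_1_right)
qed

section \<open>The relation on a single tensor factor\<close>

definition block_elt :: "nat \<Rightarrow> nat \<Rightarrow> nat \<Rightarrow> complex mat \<Rightarrow> felt" where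
  "block_elt l i j x = (\<Sum>a\<in>{1..l}. \<Sum>c\<in>{1..l}. fsc (x $$ (a - 1, c - 1)) (fgen ((i, a), (j, c))))"

lemma t1_eq_block_elt: "t1 bb l i j x = fsc ((-1) ^ par bb i) (block_elt l i j x)"
  by (simp add: t1_def block_elt_def)

lemma index_mult_mat_shifted:
  assumes "x \<in> carrier_mat l l" "y \<in> carrier_mat l l" "a \<in> {1..l}" "d \<in> {1..l}"
  shows "(x * y) $$ (a - 1, d - 1) = (\<Sum>c\<in>{1..l}. x $$ (a - 1, c - 1) * y $$ (c - 1, d - 1))"
proof -
  have "(x * y) $$ (a - 1, d - 1) = (\<Sum>c<l. x $$ (a - 1, c) * y $$ (c, d - 1))"
    using assms by (auto simp: scalar_prod_def atLeast0LessThan intro!: sum.cong)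
  also have "\<dots> = (\<Sum>c\<in>{1..l}. x $$ (a - 1, c - 1) * y $$ (c - 1, d - 1))"
    by (rule sum.reindex_bij_witness[of _ "\<lambda>c. c - 1" Suc]) auto
  finally show ?thesis .
qed

lemma block_elt_mult:
  assumes "x \<in> carrier_mat l l" "y \<in> carrier_mat l l"
  shows "block_elt l i k (x * y) = (\<Sum>a\<in>{1..l}. \<Sum>c\<in>{1..l}. \<Sum>d\<in>{1..l}.
    fsc (x $$ (a - 1, c - 1) * y $$ (c - 1, d - 1)) (fgen ((i, a), (k, d))))"
  unfolding block_elt_def
proof (rule sum.cong[OF refl])
  fix a assume a: "a \<in> {1..l}"
  have "(\<Sum>d\<in>{1..l}. fsc ((x * y) $$ (a - 1, d - 1)) (fgen ((i, a), (k, d))))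
      = (\<Sum>d\<in>{1..l}. \<Sum>c\<in>{1..l}. fsc (x $$ (a - 1, c - 1) * y $$ (c - 1, d - 1)) (fgen ((i, a), (k, d))))"
  proof (rule sum.cong[OF refl])
    fix d assume d: "d \<in> {1..l}"
    show "fsc ((x * y) $$ (a - 1, d - 1)) (fgen ((i, a), (k, d)))
        = (\<Sum>c\<in>{1..l}. fsc (x $$ (a - 1, c - 1) * y $$ (c - 1, d - 1)) (fgen ((i, a), (k, d))))"
      unfolding index_mult_mat_shifted[OF assms a d] fsc_sum_left ..
  qed
  also have "\<dots> = (\<Sum>c\<in>{1..l}. \<Sum>d\<in>{1..l}. fsc (x $$ (a - 1, c - 1) * y $$ (c - 1, d - 1)) (fgen ((i, a), (k, d))))"
    by (rule sum.swap)
  finally show "(\<Sum>d\<in>{1..l}. fsc ((x * y) $$ (a - 1, d - 1)) (fgen ((i, a), (k, d))))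
      = \<dots>" .
qed

lemma sum_fsc_of_bool_eq:
  assumes "finite B" "c \<in> B"
  shows "(\<Sum>b\<in>B. fsc (of_bool (c = b) * f b) (g b)) = fsc (f c) (g c)"
proof -
  have "(\<Sum>b\<in>B. fsc (of_bool (c = b) * f b) (g b)) = (\<Sum>b\<in>B. if c = b then fsc (f b) (g b) else 0)"
    by (rule sum.cong) auto
  then show ?thesis using assms by simp
qed

lemma scomm_fgen_fgen:
  assumes "((i, a), (j, c)) \<in> gens bb l" "((h, b), (k, d)) \<in> gens bb l"
  defines "S \<equiv> (-1) ^ ((par bb i + par bb j) * (par bb h + par bb k))"
  shows "Ueq bb l (scomm S (fgen ((i, a), (j, c))) (fgen ((h, b), (k, d))))
    (fsc (of_bool (j = h \<and> c = b)) (fgen ((i, a), (k, d)))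
     - fsc (S * of_bool (k = i \<and> d = a)) (fgen ((h, b), (j, c))))"
proof -
  have "scomm S (fgen ((i, a), (j, c))) (fgen ((h, b), (k, d)))
      - (fsc (of_bool (j = h \<and> c = b)) (fgen ((i, a), (k, d)))
         - fsc (S * of_bool (k = i \<and> d = a)) (fgen ((h, b), (j, c))))
    = glrel bb ((i, a), (j, c)) ((h, b), (k, d))"
    by (simp add: glrel_def bpar_def Let_def scomm_def S_def)
  then show ?thesis using Uideal.rel[OF assms(1,2)] by (simp add: Ueq_def)
qed

lemma block_elt_mult_contract_inner:
  assumes "x \<in> carrier_mat l l" "y \<in> carrier_mat l l"
  shows "(\<Sum>a\<in>{1..l}. \<Sum>c\<in>{1..l}. \<Sum>b\<in>{1..l}. \<Sum>d\<in>{1..l}.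
      fsc (x $$ (a - 1, c - 1) * y $$ (b - 1, d - 1) * of_bool (c = b)) (fgen ((i, a), (k, d))))
    = block_elt l i k (x * y)"
proof -
  have "(\<Sum>b\<in>{1..l}. \<Sum>d\<in>{1..l}. fsc (x $$ (a - 1, c - 1) * y $$ (b - 1, d - 1) * of_bool (c = b)) (fgen ((i, a), (k, d))))
      = (\<Sum>d\<in>{1..l}. fsc (x $$ (a - 1, c - 1) * y $$ (c - 1, d - 1)) (fgen ((i, a), (k, d))))"
    if "c \<in> {1..l}" for a c
  proof -
    have "(\<Sum>b\<in>{1..l}. \<Sum>d\<in>{1..l}. fsc (x $$ (a - 1, c - 1) * y $$ (b - 1, d - 1) * of_bool (c = b)) (fgen ((i, a), (k, d))))
        = (\<Sum>d\<in>{1..l}. \<Sum>b\<in>{1..l}. fsc (of_bool (c = b) * (x $$ (a - 1, c - 1) * y $$ (b - 1, d - 1))) (fgen ((i, a), (k, d))))"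
      by (subst sum.swap) (simp add: mult.commute)
    also have "\<dots> = (\<Sum>d\<in>{1..l}. fsc (x $$ (a - 1, c - 1) * y $$ (c - 1, d - 1)) (fgen ((i, a), (k, d))))"
      by (intro sum.cong refl sum_fsc_of_bool_eq that) simp
    finally show ?thesis .
  qed
  then show ?thesis unfolding block_elt_mult[OF assms] by simp
qed

lemma block_elt_mult_contract_outer:
  assumes "x \<in> carrier_mat l l" "y \<in> carrier_mat l l"
  shows "(\<Sum>a\<in>{1..l}. \<Sum>c\<in>{1..l}. \<Sum>b\<in>{1..l}. \<Sum>d\<in>{1..l}.
      fsc (x $$ (a - 1, c - 1) * y $$ (b - 1, d - 1) * of_bool (d = a)) (fgen ((h, b), (j, c))))
    = block_elt l h j (y * x)"
proof -
  have "(\<Sum>d\<in>{1..l}. fsc (x $$ (a - 1, c - 1) * y $$ (b - 1, d - 1) * of_bool (d = a)) (fgen ((h, b), (j, c))))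
      = fsc (y $$ (b - 1, a - 1) * x $$ (a - 1, c - 1)) (fgen ((h, b), (j, c)))"
    if "a \<in> {1..l}" for a c b
    using sum_fsc_of_bool_eq[of "{1..l}" a "\<lambda>d. x $$ (a - 1, c - 1) * y $$ (b - 1, d - 1)"] that
    by (simp add: eq_commute[of _ a] mult_ac)
  then have "(\<Sum>a\<in>{1..l}. \<Sum>c\<in>{1..l}. \<Sum>b\<in>{1..l}. \<Sum>d\<in>{1..l}.
      fsc (x $$ (a - 1, c - 1) * y $$ (b - 1, d - 1) * of_bool (d = a)) (fgen ((h, b), (j, c))))
    = (\<Sum>a\<in>{1..l}. \<Sum>c\<in>{1..l}. \<Sum>b\<in>{1..l}. fsc (y $$ (b - 1, a - 1) * x $$ (a - 1, c - 1)) (fgen ((h, b), (j, c))))"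
    by simp
  also have "\<dots> = (\<Sum>a\<in>{1..l}. \<Sum>b\<in>{1..l}. \<Sum>c\<in>{1..l}. fsc (y $$ (b - 1, a - 1) * x $$ (a - 1, c - 1)) (fgen ((h, b), (j, c))))"
    by (rule sum.cong[OF refl], rule sum.swap)
  also have "\<dots> = block_elt l h j (y * x)"
    unfolding block_elt_mult[OF assms(2,1)] by (rule sum.swap)
  finally show ?thesis .
qed

lemma scomm_block_elt:
  assumes rows: "i \<in> {1..length bb}" "j \<in> {1..length bb}" "h \<in> {1..length bb}" "k \<in> {1..length bb}"
    and x: "x \<in> carrier_mat l l" and y: "y \<in> carrier_mat l l"
  defines "S \<equiv> (-1) ^ ((par bb i + par bb j) * (par bb h + par bb k))"
  shows "Ueq bb l (scomm S (block_elt l i j x) (block_elt l h k y))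
    (fsc (of_bool (j = h)) (block_elt l i k (x * y)) - fsc (S * of_bool (k = i)) (block_elt l h j (y * x)))"
proof -
  let ?x = "\<lambda>a c. x $$ (a - 1, c - 1)" and ?y = "\<lambda>b d. y $$ (b - 1, d - 1)"
  have "scomm S (block_elt l i j x) (block_elt l h k y) = (\<Sum>a\<in>{1..l}. \<Sum>c\<in>{1..l}. \<Sum>b\<in>{1..l}. \<Sum>d\<in>{1..l}.
      fsc (?x a c * ?y b d) (scomm S (fgen ((i, a), (j, c))) (fgen ((h, b), (k, d)))))"
    unfolding block_elt_def
    by (simp only: scomm_sum_left scomm_fsc_left)
      (simp only: scomm_sum_right scomm_fsc_right fsc_sum fsc_fsc)
  also have "Ueq bb l \<dots> (\<Sum>a\<in>{1..l}. \<Sum>c\<in>{1..l}. \<Sum>b\<in>{1..l}. \<Sum>d\<in>{1..l}. fsc (?x a c * ?y b d)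
      (fsc (of_bool (j = h \<and> c = b)) (fgen ((i, a), (k, d)))
       - fsc (S * of_bool (k = i \<and> d = a)) (fgen ((h, b), (j, c)))))"
    unfolding S_def
    by (intro Ueq_sum Ueq_fsc scomm_fgen_fgen) (use rows in \<open>auto simp: gens_def boxes_def\<close>)
  also have "\<dots> = fsc (of_bool (j = h)) (\<Sum>a\<in>{1..l}. \<Sum>c\<in>{1..l}. \<Sum>b\<in>{1..l}. \<Sum>d\<in>{1..l}.
        fsc (?x a c * ?y b d * of_bool (c = b)) (fgen ((i, a), (k, d))))
      - fsc (S * of_bool (k = i)) (\<Sum>a\<in>{1..l}. \<Sum>c\<in>{1..l}. \<Sum>b\<in>{1..l}. \<Sum>d\<in>{1..l}.
        fsc (?x a c * ?y b d * of_bool (d = a)) (fgen ((h, b), (j, c))))"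
    by (simp only: fsc_diff fsc_fsc fsc_sum sum_subtractf of_bool_conj mult_ac)
  also have "\<dots> = fsc (of_bool (j = h)) (block_elt l i k (x * y)) - fsc (S * of_bool (k = i)) (block_elt l h j (y * x))"
    by (simp only: block_elt_mult_contract_inner[OF x y] block_elt_mult_contract_outer[OF x y])
  finally show ?thesis .
qed

lemma scomm_t1_t1:
  assumes rows: "i \<in> {1..length bb}" "j \<in> {1..length bb}" "h \<in> {1..length bb}" "k \<in> {1..length bb}"
    and x: "x \<in> carrier_mat l l" and y: "y \<in> carrier_mat l l"
  shows "Ueq bb l (scomm ((-1) ^ ((par bb i + par bb j) * (par bb h + par bb k))) (t1 bb l i j x) (t1 bb l h k y))
    (fsc ((-1) ^ (par bb i * par bb j + par bb i * par bb h + par bb j * par bb h))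
      (fsc (of_bool (h = j)) (t1 bb l i k (x * y)) - fsc (of_bool (i = k)) (t1 bb l h j (y * x))))"
proof -
  define S :: complex where "S = (-1) ^ ((par bb i + par bb j) * (par bb h + par bb k))"
  have "scomm S (t1 bb l i j x) (t1 bb l h k y)
      = fsc ((-1) ^ par bb i * (-1) ^ par bb h) (scomm S (block_elt l i j x) (block_elt l h k y))"
    by (simp add: t1_eq_block_elt scomm_fsc_left scomm_fsc_right mult.commute)
  also have "Ueq bb l \<dots> (fsc ((-1) ^ par bb i * (-1) ^ par bb h)
      (fsc (of_bool (j = h)) (block_elt l i k (x * y)) - fsc (S * of_bool (k = i)) (block_elt l h j (y * x))))"
    unfolding S_def by (intro Ueq_fsc scomm_block_elt rows x y)
  also have "\<dots> = fsc ((-1) ^ (par bb i * par bb j + par bb i * par bb h + par bb j * par bb h))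
      (fsc (of_bool (h = j)) (t1 bb l i k (x * y)) - fsc (of_bool (i = k)) (t1 bb l h j (y * x)))"
    by (cases "h = j"; cases "i = k")
      (auto simp: S_def t1_eq_block_elt fsc_diff fsc_minus_one minus_one_power_iff even_add even_mult_iff)
  finally show ?thesis unfolding S_def .
qed

section \<open>Tensors of arbitrary length\<close>

lemma t1_falg: "i \<in> {1..length bb} \<Longrightarrow> j \<in> {1..length bb} \<Longrightarrow> t1 bb l i j x \<in> falg bb l"
  unfolding t1_def by (intro falg_fsc falg_sum falg_fgen) (auto simp: gens_def boxes_def)

lemma tt_falg: "i \<in> {1..length bb} \<Longrightarrow> j \<in> {1..length bb} \<Longrightarrow> tt bb l i j ys \<in> falg bb l"
  by (induction bb l i j ys rule: tt.induct) (auto intro!: falg_fsc falg_fone falg_zero t1_falg falg_sum falg_fmul)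

lemma tt_Cons:
  assumes "j \<in> {1..length bb}"
  shows "tt bb l i j (y # ys) = (\<Sum>p\<in>{1..length bb}. t1 bb l i p y \<odot> tt bb l p j ys)"
proof (cases ys)
  case Nil
  have "(\<Sum>p\<in>{1..length bb}. t1 bb l i p y \<odot> tt bb l p j ys)
      = (\<Sum>p\<in>{1..length bb}. if p = j then t1 bb l i j y else 0)"
    by (rule sum.cong) (auto simp: Nil fmul_fsc_right)
  with assms Nil show ?thesis by simp
qed simp

text \<open>The right-hand side of the theorem without its sign: \<open>x\<close> is multiplied into the
  \<open>s\<close>-th tensor factor, from the left in the second factor and from the right in the first.\<close>

definition insert_sum ::
    "bsym list \<Rightarrow> nat \<Rightarrow> nat \<Rightarrow> nat \<Rightarrow> complex mat \<Rightarrow> nat \<Rightarrow> nat \<Rightarrow> complex mat list \<Rightarrow> felt" where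
  "insert_sum bb l i k x h j ys = (\<Sum>s\<in>{1..length ys}.
      tt bb l h j (take (s - 1) ys) \<odot> tt bb l i k ((x * ys ! (s - 1)) # drop s ys)
    - tt bb l h j (take (s - 1) ys @ [ys ! (s - 1) * x]) \<odot> tt bb l i k (drop s ys))"

lemma insert_sum_Nil [simp]: "insert_sum bb l i k x h j [] = 0"
  by (simp add: insert_sum_def)

lemma insert_sum_Cons:
  assumes i: "i \<in> {1..length bb}" and j: "j \<in> {1..length bb}" and k: "k \<in> {1..length bb}"
  shows "insert_sum bb l i k x h j (y # ys) = (\<Sum>p\<in>{1..length bb}.
      (fsc (of_bool (h = j)) (t1 bb l i p (x * y)) - fsc (of_bool (i = p)) (t1 bb l h j (y * x))) \<odot> tt bb l p k ys
    + t1 bb l h p y \<odot> insert_sum bb l i k x p j ys)"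
proof -
  define P where "P = {1..length bb}"
  define f where "f s = tt bb l h j (take (s - 1) (y # ys)) \<odot> tt bb l i k ((x * (y # ys) ! (s - 1)) # drop s (y # ys))
    - tt bb l h j (take (s - 1) (y # ys) @ [(y # ys) ! (s - 1) * x]) \<odot> tt bb l i k (drop s (y # ys))" for s
  have "insert_sum bb l i k x h j (y # ys) = sum f {1..Suc (length ys)}"
    unfolding insert_sum_def f_def by simp
  also have "\<dots> = f 1 + sum f {Suc 1..Suc (length ys)}"
    by (rule sum.atLeast_Suc_atMost) simp
  also have "sum f {Suc 1..Suc (length ys)} = (\<Sum>s\<in>{1..length ys}. f (Suc s))"
    by (rule sum.shift_bounds_cl_Suc_ivl)
  also have "f 1 = (\<Sum>p\<in>P.
      (fsc (of_bool (h = j)) (t1 bb l i p (x * y)) - fsc (of_bool (i = p)) (t1 bb l h j (y * x))) \<odot> tt bb l p k ys)"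
  proof -
    have "(\<Sum>p\<in>P. fsc (of_bool (i = p)) (t1 bb l h j (y * x) \<odot> tt bb l p k ys)) = t1 bb l h j (y * x) \<odot> tt bb l i k ys"
      using i by (simp add: P_def fsc_of_bool)
    then show ?thesis
      by (simp add: f_def tt_Cons[OF k] fmul_diff_left sum_subtractf fmul_fsc_left fsc_sum P_def)
  qed
  also have "(\<Sum>s\<in>{1..length ys}. f (Suc s)) = (\<Sum>p\<in>P. t1 bb l h p y \<odot> insert_sum bb l i k x p j ys)"
  proof -
    have "f (Suc s) = (\<Sum>p\<in>P. t1 bb l h p y \<odot>
        (tt bb l p j (take (s - 1) ys) \<odot> tt bb l i k ((x * ys ! (s - 1)) # drop s ys)
         - tt bb l p j (take (s - 1) ys @ [ys ! (s - 1) * x]) \<odot> tt bb l i k (drop s ys)))"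
      if "s \<in> {1..length ys}" for s
      using that unfolding f_def P_def
      by (cases s) (simp_all add: tt_Cons[OF j] fmul_sum_left fmul_assoc fmul_diff_right sum_subtractf)
    then show ?thesis
      unfolding insert_sum_def fmul_sum_right by (simp add: sum.swap[of _ P])
  qed
  finally show ?thesis by (simp only: P_def sum.distrib)
qed

lemma scomm_tt_Cons:
  assumes "k \<in> {1..length bb}"
  shows "scomm ((-1) ^ (e * (par bb h + par bb k))) X (tt bb l h k (y # ys)) = (\<Sum>p\<in>{1..length bb}.
      scomm ((-1) ^ (e * (par bb h + par bb p))) X (t1 bb l h p y) \<odot> tt bb l p k ys
    + fsc ((-1) ^ (e * (par bb h + par bb p))) (t1 bb l h p y \<odot> scomm ((-1) ^ (e * (par bb p + par bb k))) X (tt bb l p k ys)))"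
  unfolding tt_Cons[OF assms] scomm_sum_right
proof (rule sum.cong[OF refl])
  fix p
  show "scomm ((-1) ^ (e * (par bb h + par bb k))) X (t1 bb l h p y \<odot> tt bb l p k ys)
      = scomm ((-1) ^ (e * (par bb h + par bb p))) X (t1 bb l h p y) \<odot> tt bb l p k ys
      + fsc ((-1) ^ (e * (par bb h + par bb p))) (t1 bb l h p y \<odot> scomm ((-1) ^ (e * (par bb p + par bb k))) X (tt bb l p k ys))"
    unfolding minus_one_power_mult_add[of e "par bb h" "par bb k" "par bb p"]
    by (rule scomm_fmul_right)
qed

lemma scomm_t1_tt:
  assumes i: "i \<in> {1..length bb}" and j: "j \<in> {1..length bb}" and k: "k \<in> {1..length bb}"
    and x: "x \<in> carrier_mat l l"
  shows "\<forall>y\<in>set ys. y \<in> carrier_mat l l \<Longrightarrow> h \<in> {1..length bb} \<Longrightarrow>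
    Ueq bb l (scomm ((-1) ^ ((par bb i + par bb j) * (par bb h + par bb k))) (t1 bb l i j x) (tt bb l h k ys))
      (fsc ((-1) ^ (par bb i * par bb j + par bb i * par bb h + par bb j * par bb h)) (insert_sum bb l i k x h j ys))"
proof (induction ys arbitrary: h)
  case Nil
  \<comment> \<open>\<open>tt bb l h k []\<close> vanishes unless \<open>h = k\<close>, and then the sign is \<open>1\<close>.\<close>
  have "(-1 :: complex) ^ ((par bb i + par bb j) * (par bb k + par bb k)) = 1"
    by (simp add: minus_one_power_iff)
  then have "scomm ((-1) ^ ((par bb i + par bb j) * (par bb h + par bb k))) (t1 bb l i j x) (tt bb l h k []) = 0"
    by (cases "h = k") (simp_all add: scomm_def)
  then show ?case by (simp only: insert_sum_Nil fsc_zero_right Ueq_refl)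
next
  case (Cons y ys)
  define P where "P = {1..length bb}"
  define S where "S p q = (-1 :: complex) ^ ((par bb i + par bb j) * (par bb p + par bb q))" for p q
  define \<sigma> where "\<sigma> p = (-1 :: complex) ^ (par bb i * par bb j + par bb i * par bb p + par bb j * par bb p)" for p
  define X where "X = t1 bb l i j x"
  have y: "y \<in> carrier_mat l l" and ys: "\<forall>y\<in>set ys. y \<in> carrier_mat l l"
    using Cons.prems(1) by simp_all
  have "scomm (S h k) X (tt bb l h k (y # ys)) = (\<Sum>p\<in>P.
      scomm (S h p) X (t1 bb l h p y) \<odot> tt bb l p k ys + fsc (S h p) (t1 bb l h p y \<odot> scomm (S p k) X (tt bb l p k ys)))"
    unfolding S_def P_def by (rule scomm_tt_Cons[OF k])
  also have "Ueq bb l \<dots> (\<Sum>p\<in>P.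
      fsc (\<sigma> h) (fsc (of_bool (h = j)) (t1 bb l i p (x * y)) - fsc (of_bool (i = p)) (t1 bb l h j (y * x))) \<odot> tt bb l p k ys
      + fsc (S h p) (t1 bb l h p y \<odot> fsc (\<sigma> p) (insert_sum bb l i k x p j ys)))"
  proof (rule Ueq_sum, rule Ueq_add)
    fix p assume "p \<in> P"
    then have p: "p \<in> {1..length bb}" by (simp add: P_def)
    show "Ueq bb l (scomm (S h p) X (t1 bb l h p y) \<odot> tt bb l p k ys)
        (fsc (\<sigma> h) (fsc (of_bool (h = j)) (t1 bb l i p (x * y)) - fsc (of_bool (i = p)) (t1 bb l h j (y * x))) \<odot> tt bb l p k ys)"
      unfolding S_def \<sigma>_def X_def
      by (intro Ueq_fmul_right tt_falg scomm_t1_t1 i j Cons.prems(2) p k x y)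
    show "Ueq bb l (fsc (S h p) (t1 bb l h p y \<odot> scomm (S p k) X (tt bb l p k ys)))
        (fsc (S h p) (t1 bb l h p y \<odot> fsc (\<sigma> p) (insert_sum bb l i k x p j ys)))"
      unfolding S_def \<sigma>_def X_def
      by (intro Ueq_fsc Ueq_fmul_left t1_falg Cons.IH ys p Cons.prems(2))
  qed
  also have "\<dots> = fsc (\<sigma> h) (insert_sum bb l i k x h j (y # ys))"
  proof -
    have "S h p * \<sigma> p = \<sigma> h" for p
      unfolding S_def \<sigma>_def by (rule minus_one_power_sign_shift)
    then show ?thesis
      by (simp add: insert_sum_Cons[OF i j k] P_def fsc_sum fsc_add fmul_fsc_left fmul_fsc_right sum.distrib)
  qed
  finally show ?case unfolding S_def \<sigma>_def X_def .
qed

theorem lemma4p1: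
  fixes m n l :: nat and bb :: "bsym list" and i j h k :: nat
    and x :: "complex mat" and ys :: "complex mat list"
  assumes "length bb = m + n" and "count_list bb Dl = m" and "count_list bb Ep = n"
    and "i \<in> {1..m+n}" and "j \<in> {1..m+n}" and "h \<in> {1..m+n}" and "k \<in> {1..m+n}"
    and "ys \<noteq> []"
    and "x \<in> carrier_mat l l" and "\<forall>y\<in>set ys. y \<in> carrier_mat l l"
  shows "Ueq bb l
    (scomm ((-1) ^ ((par bb i + par bb j) * (par bb h + par bb k)))
       (tt bb l i j [x]) (tt bb l h k ys))
    (fsc ((-1) ^ (par bb i * par bb j + par bb i * par bb h + par bb j * par bb h))
       (\<Sum>s\<in>{1..length ys}.
          tt bb l h j (take (s - 1) ys) \<odot> tt bb l i k ((x * ys ! (s - 1)) # drop s ys)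
        - tt bb l h j (take (s - 1) ys @ [ys ! (s - 1) * x]) \<odot> tt bb l i k (drop s ys)))"
  using scomm_t1_tt[of i bb j k x l ys h] assms(1,4-7,9,10)
  by (simp add: insert_sum_def)

end
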